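(* Let $\tau_1,\tau_2\in\mathcal{T}$ be such that $(\mathbb{R},\tau_1)$ and $(\mathbb{R},\tau_2)$ are locally connected. (a) If $(\mathbb{R},\tau_1)$ is separable and $(\mathbb{R},\tau_2)$ is not discrete, then $(\mathbb{R},\tau_1)$ is homeomorphic to a subspace of $(\mathbb{R},\tau_2)$. (b) If $(\mathbb{R},\tau_2)$ is neither separable nor discrete, then $(\mathbb{R},\tau_1)$ is homeomorphic to a subspace of $(\mathbb{R},\tau_2)$.
   Context: $\eta$ denotes the Euclidean topology on $\mathbb{R}$; $\mathcal{T}$ is the family of all topologies on $\mathbb{R}$ finer than $\eta$. *)

theory Defs
  imports "HOL-Analysis.Analysis"
begin

definition finer_than_euclidean :: "real topology set" where
  "finer_than_euclidean = {\<tau>. topspace \<tau> = UNIV \<and> (\<forall>U. openin euclideanreal U \<longrightarrow> openin \<tau> U)}"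

end

theory Submission
  imports Defs
begin

(* Let \<tau> be a locally connected topology on the reals finer than the Euclidean one. Its
   components are open, connected in the Euclidean sense (hence intervals), and, by a
   separation argument at the ends of connected open subsets, \<tau> induces the Euclidean
   topology on each of them. The singleton components are exactly the isolated points; every
   other component contains a rational, so there are only countably many of those.

   If \<tau>2 is not discrete, one of its components contains an open interval (a,b), on which \<tau>2
   is Euclidean; (a,b) contains countably many disjoint open intervals, each homeomorphic to
   the real line. Hence \<tau>1 embeds into \<tau>2 as soon as all components of \<tau>1, except for some
   isolated points that are sent injectively to isolated points of \<tau>2, are countably many:
   each remaining component is mapped homeomorphically into its own small interval. In (a)
   separability of \<tau>1 makes all its components countably many. In (b) the isolated points of
   the non-separable \<tau>2 are uncountable, and all but countably many of their condensation
   points are isolated points themselves (only an endpoint of a component can be a limit of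
   isolated points), so by the perfect set theorem there are continuum many of them. *)

section \<open>Condensation points\<close>

definition condensation_points :: "'a::topological_space set \<Rightarrow> 'a set"
  where "condensation_points T = {x. \<forall>U. open U \<and> x \<in> U \<longrightarrow> uncountable (U \<inter> T)}"

lemma countable_Diff_condensation_points:
  fixes T :: "'a::second_countable_topology set"
  shows "countable (T - condensation_points T)"
proof -
  define \<F> where "\<F> = {U. open U \<and> countable (U \<inter> T)}"
  obtain \<F>' where \<F>': "\<F>' \<subseteq> \<F>" "countable \<F>'" "\<Union>\<F>' = \<Union>\<F>"
    by (rule Lindelof[of \<F>]) (auto simp: \<F>_def)
  have "T - condensation_points T \<subseteq> (\<Union>U\<in>\<F>'. U \<inter> T)"
  proof
    fix x assume "x \<in> T - condensation_points T"
    then have "x \<in> T" "x \<in> \<Union>\<F>"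
      by (auto simp: condensation_points_def \<F>_def)
    then show "x \<in> (\<Union>U\<in>\<F>'. U \<inter> T)"
      using \<F>'(3) by blast
  qed
  moreover have "countable (\<Union>U\<in>\<F>'. U \<inter> T)"
    using \<F>'(1,2) by (intro countable_UN) (auto simp: \<F>_def)
  ultimately show ?thesis
    by (rule countable_subset)
qed

lemma derived_set_of_condensation_points:
  fixes T :: "'a::second_countable_topology set"
  shows "euclidean derived_set_of condensation_points T = condensation_points T"
proof (intro set_eqI iffI)
  fix x assume x: "x \<in> euclidean derived_set_of condensation_points T"
  show "x \<in> condensation_points T"
    unfolding condensation_points_def
  proof (intro CollectI allI impI)
    fix U assume "open U \<and> x \<in> U"
    then obtain y where "y \<in> condensation_points T" "y \<in> U" "open U"
      using x unfolding derived_set_of_def by auto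
    then show "uncountable (U \<inter> T)"
      unfolding condensation_points_def by blast
  qed
next
  fix x assume x: "x \<in> condensation_points T"
  show "x \<in> euclidean derived_set_of condensation_points T"
    unfolding derived_set_of_def
  proof (intro CollectI conjI allI impI)
    fix U assume U: "x \<in> U \<and> openin euclidean U"
    have "uncountable (U \<inter> T)"
      using x U unfolding condensation_points_def by simp
    then have "uncountable (U \<inter> T - (T - condensation_points T) - {x})"
      by (intro uncountable_minus_countable countable_Diff_condensation_points) simp_all
    then obtain y where "y \<in> U \<inter> T - (T - condensation_points T) - {x}"
      by (metis countable_empty equals0I)
    then show "\<exists>y. y \<noteq> x \<and> y \<in> condensation_points T \<and> y \<in> U"
      by blast
  qed simp
qed

lemma continuum_lepoll_condensation_points:
  fixes T :: "'a::polish_space set"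
  assumes "uncountable T"
  shows "(UNIV::real set) \<lesssim> condensation_points T"
proof (rule lepoll_perfect_set)
  show "completely_metrizable_space (euclidean::'a topology) \<or>
      locally_compact_space (euclidean::'a topology) \<and> Hausdorff_space (euclidean::'a topology)"
    using completely_metrizable_space_euclidean by blast
  show "euclidean derived_set_of condensation_points T = condensation_points T"
    by (rule derived_set_of_condensation_points)
  show "condensation_points T \<noteq> {}"
    using countable_Diff_condensation_points[of T] assms by auto
qed

lemma continuum_lepoll_Diff_countable:
  assumes "(UNIV::real set) \<lesssim> P" and K: "countable K"
  shows "(UNIV::real set) \<lesssim> P - K"
proof -
  have "(UNIV::real set) \<times> (UNIV::real set) \<lesssim> (UNIV::real set)"
    by (intro eqpoll_imp_lepoll iffD2[OF eqpoll_iff_card_of_ordIso] card_of_Times_same_infinite)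
      (rule infinite_UNIV_char_0)
  from lepoll_trans[OF this assms(1)]
  obtain \<phi> :: "real \<times> real \<Rightarrow> 'a" where \<phi>: "inj \<phi>" "range \<phi> \<subseteq> P"
    unfolding lepoll_def by auto
  \<comment> \<open>Every fibre of \<open>\<phi>\<close> over a first coordinate is uncountable, so it is not swallowed by \<open>K\<close>.\<close>
  have "\<exists>y. \<phi> (x, y) \<notin> K" for x
  proof (rule ccontr)
    assume "\<not> (\<exists>y. \<phi> (x, y) \<notin> K)"
    then have "countable (range (\<lambda>y. \<phi> (x, y)))"
      by (intro countable_subset[OF _ K]) auto
    moreover have "inj (\<lambda>y. \<phi> (x, y))"
      using \<phi>(1) by (simp add: inj_on_def)
    ultimately have "countable (UNIV::real set)"
      by (rule countable_image_inj_on)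
    with uncountable_UNIV_real show False
      by contradiction
  qed
  then obtain \<psi> where \<psi>: "\<And>x. \<phi> (x, \<psi> x) \<notin> K"
    by metis
  have "inj (\<lambda>x. \<phi> (x, \<psi> x))"
    using \<phi>(1) by (simp add: inj_on_def)
  moreover have "range (\<lambda>x. \<phi> (x, \<psi> x)) \<subseteq> P - K"
    using \<phi>(2) \<psi> by auto
  ultimately show ?thesis
    unfolding lepoll_def by blast
qed

section \<open>Gluing embeddings\<close>

lemma embedding_map_singleton:
  assumes "f a \<in> topspace Y"
  shows "embedding_map (subtopology X {a}) Y f"
proof -
  have "continuous_map (subtopology X {a}) Y f"
    by (rule continuous_map_eq[of _ _ "\<lambda>_. f a"]) (use assms in auto)
  then show ?thesis
    unfolding embedding_map_def homeomorphic_map_maps homeomorphic_maps_def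
    by (intro exI[of _ "\<lambda>_. a"]) (auto simp: continuous_map_in_subtopology)
qed

lemma homeomorphism_imp_homeomorphic_map:
  "homeomorphism S T f g \<Longrightarrow> homeomorphic_map (top_of_set S) (top_of_set T) f"
  unfolding homeomorphism_def homeomorphic_map_maps homeomorphic_maps_def
  by (auto simp: continuous_map_subtopology_eu)

lemma open_map_from_open_pieces:
  assumes cover: "topspace X = (\<Union>i\<in>I. C i)"
    and open_image: "\<And>i. i \<in> I \<Longrightarrow> openin Y (f ` C i)"
    and hom: "\<And>i. i \<in> I \<Longrightarrow> homeomorphic_map (subtopology X (C i)) (subtopology Y (f ` C i)) f"
  shows "open_map X Y f"
  unfolding open_map_def
proof (intro allI impI)
  fix U assume U: "openin X U"
  have "openin Y (f ` (U \<inter> C i))" if "i \<in> I" for i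
  proof -
    have "C i \<subseteq> topspace X"
      using cover that by blast
    then have "openin (subtopology Y (f ` C i)) (f ` (U \<inter> C i))"
      using homeomorphic_map_openness[OF hom[OF that], of "U \<inter> C i"] U
      by (simp add: openin_subtopology_Int Int_absorb1)
    then show ?thesis
      using openin_trans_full open_image[OF that] by blast
  qed
  moreover have "U = (\<Union>i\<in>I. U \<inter> C i)"
    using openin_subset[OF U] unfolding cover by blast
  then have "f ` U = (\<Union>i\<in>I. f ` (U \<inter> C i))"
    by (metis image_UN)
  ultimately show "openin Y (f ` U)"
    by auto
qed

lemma embedding_map_glue:
  assumes cover: "topspace X = (\<Union>i\<in>I. C i)"
    and C: "\<And>i. i \<in> I \<Longrightarrow> openin X (C i)"
    and D: "\<And>i. i \<in> I \<Longrightarrow> openin Y (D i)"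
    and disj: "\<And>i j. i \<in> I \<Longrightarrow> j \<in> I \<Longrightarrow> C i \<noteq> C j \<Longrightarrow> disjnt (D i) (D j)"
    and into: "\<And>i. i \<in> I \<Longrightarrow> f ` C i \<subseteq> D i"
    and emb: "\<And>i. i \<in> I \<Longrightarrow> embedding_map (subtopology X (C i)) Y f"
  shows "embedding_map X Y f"
proof -
  let ?Z = "subtopology Y (f ` topspace X)"
  have C_sub: "C i \<subseteq> topspace X" if "i \<in> I" for i
    using cover that by blast
  have piece: "x \<in> C i" if "i \<in> I" "x \<in> topspace X" "f x \<in> D i" for i x
    using that cover into disj unfolding disjnt_iff by blast
  have cont: "continuous_map X Y f"
  proof (rule pasting_lemma[where I=I and T=C and f="\<lambda>_. f"])
    show "continuous_map (subtopology X (C i)) Y f" if "i \<in> I" for i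
      using emb[OF that] unfolding embedding_map_def
      by (meson continuous_map_in_subtopology homeomorphic_imp_continuous_map)
    show "\<exists>j. j \<in> I \<and> x \<in> C j \<and> f x = f x" if "x \<in> topspace X" for x
      using cover that by blast
  qed (use C in simp_all)
  have "open_map X ?Z f"
  proof (rule open_map_from_open_pieces[OF cover])
    fix i assume i: "i \<in> I"
    have "f ` C i = D i \<inter> f ` topspace X"
      using piece[OF i] into[OF i] C_sub[OF i] by fastforce
    then show "openin ?Z (f ` C i)"
      using openin_subtopology_Int[OF D[OF i]] by (simp only:)
    show "homeomorphic_map (subtopology X (C i)) (subtopology ?Z (f ` C i)) f"
      using emb[OF i] C_sub[OF i]
      by (simp add: embedding_map_def subtopology_subtopology image_mono Int_absorb1)
  qed
  moreover have "inj_on f (topspace X)"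
  proof (rule inj_onI)
    fix x y assume xy: "x \<in> topspace X" "y \<in> topspace X" "f x = f y"
    obtain i where i: "i \<in> I" "x \<in> C i"
      using cover xy(1) by blast
    have "f x \<in> D i"
      using into[OF i(1)] i(2) by blast
    with xy(3) have "y \<in> C i"
      using piece[OF i(1) xy(2)] by simp
    moreover have "inj_on f (C i)"
      using emb[OF i(1)] C_sub[OF i(1)]
      unfolding embedding_map_def homeomorphic_map_def by (simp add: Int_absorb1)
    ultimately show "x = y"
      using i(2) xy(3) by (meson inj_onD)
  qed
  ultimately show ?thesis
    unfolding embedding_map_def using cont continuous_map_image_subset_topspace[OF cont]
    by (intro bijective_open_imp_homeomorphic_map) (auto simp: continuous_map_in_subtopology)
qed

lemma disjoint_open_copies_of_real:
  fixes a b :: real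
  assumes "a < b"
  obtains J :: "nat \<Rightarrow> real set" and \<phi> \<psi> :: "nat \<Rightarrow> real \<Rightarrow> real"
  where "\<And>n. open (J n)" "\<And>n. J n \<subseteq> {a<..<b}" "\<And>m n. m \<noteq> n \<Longrightarrow> disjnt (J m) (J n)"
    "\<And>n. homeomorphism UNIV (J n) (\<phi> n) (\<psi> n)"
proof -
  define lo where "lo n = a + (b - a) / (real n + 2)" for n :: nat
  define hi where "hi n = a + (b - a) / (real n + 1)" for n :: nat
  have "lo n < hi n" for n
    using assms by (simp add: lo_def hi_def divide_strict_left_mono)
  then have "(UNIV::real set) homeomorphic {lo n<..<hi n}" for n
    by (subst homeomorphic_sym) (rule homeomorphic_open_interval_UNIV)
  then have "\<forall>n. \<exists>\<phi> \<psi>. homeomorphism (UNIV::real set) {lo n<..<hi n} \<phi> \<psi>"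
    unfolding homeomorphic_def by blast
  then obtain \<phi> \<psi> :: "nat \<Rightarrow> real \<Rightarrow> real"
    where "\<And>n. homeomorphism UNIV {lo n<..<hi n} (\<phi> n) (\<psi> n)"
    by metis
  moreover have "{lo n<..<hi n} \<subseteq> {a<..<b}" for n
  proof -
    have "(b - a) / (real n + 1) \<le> (b - a) / 1"
      using assms by (intro divide_left_mono) auto
    then have "a < lo n" "hi n \<le> b"
      using assms by (simp_all add: lo_def hi_def)
    then show ?thesis
      by auto
  qed
  moreover have "disjnt {lo m<..<hi m} {lo n<..<hi n}" if "m \<noteq> n" for m n
  proof -
    have sep: "hi n \<le> lo m" if "m < n" for m n
      using assms that by (simp add: lo_def hi_def divide_left_mono)
    show ?thesis
      using that sep[of m n] sep[of n m]
      by (cases m n rule: linorder_cases) (auto simp: disjnt_iff)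
  qed
  ultimately show thesis
    by (intro that[of "\<lambda>n. {lo n<..<hi n}" \<phi> \<psi>]) auto
qed

section \<open>Locally connected refinements of the Euclidean topology\<close>

lemma is_interval_contains_open_interval:
  fixes S :: "real set"
  assumes "is_interval S" "x \<in> S" "y \<in> S" "x \<noteq> y"
  shows "\<exists>a b. a < b \<and> {a<..<b} \<subseteq> S"
proof -
  have "{min x y<..<max x y} \<subseteq> S"
  proof
    fix z assume z: "z \<in> {min x y<..<max x y}"
    have "min x y \<in> S" "max x y \<in> S"
      using assms(2,3) by (simp_all add: min_def max_def)
    with z show "z \<in> S"
      using mem_is_interval_1_I[OF assms(1)] by (meson greaterThanLessThan_iff less_imp_le)
  qed
  moreover have "min x y < max x y"
    using assms(4) by linarith
  ultimately show ?thesis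
    by blast
qed

locale euclidean_refinement =
  fixes \<tau> :: "real topology"
  assumes finer: "\<tau> \<in> finer_than_euclidean"
begin

abbreviation component :: "real \<Rightarrow> real set"
  where "component x \<equiv> connected_component_of_set \<tau> x"

lemma topspace_eq_UNIV [simp]: "topspace \<tau> = UNIV"
  using finer by (simp add: finer_than_euclidean_def)

lemma openin_if_open: "open U \<Longrightarrow> openin \<tau> U"
  using finer by (simp add: finer_than_euclidean_def)

lemma closedin_if_closed: "closed U \<Longrightarrow> closedin \<tau> U"
  by (simp add: closedin_def openin_if_open Compl_eq_Diff_UNIV[symmetric] open_Compl)

lemma connected_if_connectedin:
  assumes "connectedin \<tau> S" shows "connected S"
proof -
  have "continuous_map \<tau> euclideanreal id"
    by (simp add: continuous_map_def openin_if_open)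
  from connectedin_continuous_map_image[OF this assms] show ?thesis
    by simp
qed

lemma is_interval_component: "is_interval (component x)"
  by (simp add: is_interval_connected_1 connected_if_connectedin connectedin_connected_component_of)

lemma in_component [simp]: "x \<in> component x"
  by (simp add: connected_component_of_refl)

lemma component_eq: "y \<in> component x \<Longrightarrow> component y = component x"
  by (simp add: connected_component_of_equiv)

lemma component_eq_singleton_if_isolated:
  assumes "openin \<tau> {x}" shows "component x = {x}"
  using connectedin_clopen_cases[OF connectedin_connected_component_of[of \<tau> x]
      closedin_if_closed[OF closed_singleton] assms]
  using in_component[of x] unfolding disjnt_iff by blast

\<comment> \<open>\<open>L\<close> stands for one of the two open half-lines at \<open>y\<close>.\<close>
lemma connectedin_side_meets_open_subset:
  assumes C: "connectedin \<tau> C" and W: "openin \<tau> W" "W \<subseteq> C" "y \<in> W"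
    and L: "open L" "closed (insert y L)" and "C \<inter> L \<noteq> {}"
  shows "W \<inter> L \<noteq> {}"
proof
  assume WL: "W \<inter> L = {}"
  let ?R = "W \<union> - insert y L"
  have "openin \<tau> L" "openin \<tau> ?R"
    using W L by (simp_all add: openin_if_open openin_Un open_Compl)
  moreover have "C \<subseteq> L \<union> ?R" "L \<inter> ?R \<inter> C = {}" "?R \<inter> C \<noteq> {}"
    using W WL by auto
  ultimately show False
    using C \<open>C \<inter> L \<noteq> {}\<close> unfolding connectedin by blast
qed

lemma openin_top_of_set_if_connected_subset:
  assumes C: "connectedin \<tau> C" and W: "openin \<tau> W" "connected W" "W \<subseteq> C"
  shows "openin (top_of_set C) W"
  unfolding openin_euclidean_subtopology_iff
proof (intro conjI ballI)
  fix y assume y: "y \<in> W"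
  have "insert y {y<..} = {y..}" "insert y {..<y} = {..y}"
    by auto
  then have closed_sides: "closed (insert y {y<..})" "closed (insert y {..<y})"
    by simp_all
  have "\<exists>e>0. \<forall>c\<in>C. y < c \<and> c < y + e \<longrightarrow> c \<in> W"
  proof (cases "C \<inter> {y<..} = {}")
    case False
    then obtain w where w: "w \<in> W" "y < w"
      using connectedin_side_meets_open_subset[OF C W(1,3) y, of "{y<..}"] closed_sides by auto
    then show ?thesis
      using connectedD_interval[OF W(2) y w(1)] by (intro exI[of _ "w - y"]) auto
  qed (auto intro: exI[of _ 1])
  then obtain e1 where e1: "e1 > 0" "\<forall>c\<in>C. y < c \<and> c < y + e1 \<longrightarrow> c \<in> W"
    by blast
  have "\<exists>e>0. \<forall>c\<in>C. y - e < c \<and> c < y \<longrightarrow> c \<in> W"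
  proof (cases "C \<inter> {..<y} = {}")
    case False
    then obtain w where w: "w \<in> W" "w < y"
      using connectedin_side_meets_open_subset[OF C W(1,3) y, of "{..<y}"] closed_sides by auto
    then show ?thesis
      using connectedD_interval[OF W(2) w(1) y] by (intro exI[of _ "y - w"]) auto
  qed (auto intro: exI[of _ 1])
  then obtain e2 where e2: "e2 > 0" "\<forall>c\<in>C. y - e2 < c \<and> c < y \<longrightarrow> c \<in> W"
    by blast
  show "\<exists>e>0. \<forall>c\<in>C. dist c y < e \<longrightarrow> c \<in> W"
  proof (intro exI[of _ "min e1 e2"] conjI ballI impI)
    fix c assume "c \<in> C" "dist c y < min e1 e2"
    then show "c \<in> W"
      using e1 e2 y by (cases c y rule: linorder_cases) (auto simp: dist_real_def)
  qed (use e1 e2 in simp)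
qed (use W in simp)

end

locale locally_connected_refinement = euclidean_refinement +
  assumes locally_connected: "locally_connected_space \<tau>"
begin

lemma openin_component: "openin \<tau> (component x)"
  by (rule openin_connected_component_of_locally_connected_space[OF locally_connected])

lemma isolated_iff_component_eq_singleton: "openin \<tau> {x} \<longleftrightarrow> component x = {x}"
  using component_eq_singleton_if_isolated openin_component by metis

lemma subtopology_subset_component:
  assumes "S \<subseteq> component x"
  shows "subtopology \<tau> S = top_of_set S"
proof -
  let ?C = "component x"
  have "openin (subtopology \<tau> ?C) U \<longleftrightarrow> openin (top_of_set ?C) U" for U
  proof
    assume U: "openin (subtopology \<tau> ?C) U"
    show "openin (top_of_set ?C) U"
    proof (subst openin_subopen, intro ballI)
      fix y assume "y \<in> U"
      then obtain W where W: "openin \<tau> W" "connectedin \<tau> W" "y \<in> W" "W \<subseteq> U"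
        using locally_connected openin_trans_full[OF U openin_component]
        unfolding locally_connected_space by blast
      have "openin (top_of_set ?C) W"
        using W(4) openin_imp_subset[OF U]
        by (intro openin_top_of_set_if_connected_subset[OF connectedin_connected_component_of W(1)]
            connected_if_connectedin[OF W(2)]) auto
      with W(3,4) show "\<exists>W. openin (top_of_set ?C) W \<and> y \<in> W \<and> W \<subseteq> U"
        by blast
    qed
  next
    assume "openin (top_of_set ?C) U"
    then show "openin (subtopology \<tau> ?C) U"
      unfolding openin_subtopology using openin_if_open by auto
  qed
  then have "subtopology \<tau> ?C = top_of_set ?C"
    by (simp add: topology_eq)
  then show ?thesis
    using assms by (metis inf.absorb_iff2 subtopology_subtopology)
qed

lemma nonisolated_component_contains_interval:
  assumes "\<not> openin \<tau> {x}"
  shows "\<exists>a b. a < b \<and> {a<..<b} \<subseteq> component x"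
proof -
  obtain y where "y \<in> component x" "y \<noteq> x"
    using assms in_component[of x] isolated_iff_component_eq_singleton by blast
  then show ?thesis
    using is_interval_contains_open_interval[OF is_interval_component in_component[of x]] by blast
qed

lemma countable_nonisolated_components:
  "countable (component ` {x. \<not> openin \<tau> {x}})"
proof (rule countable_subset)
  show "component ` {x. \<not> openin \<tau> {x}} \<subseteq> component ` \<rat>"
  proof clarify
    fix x assume "\<not> openin \<tau> {x}"
    then obtain a b where "a < b" "{a<..<b} \<subseteq> component x"
      using nonisolated_component_contains_interval by blast
    moreover obtain q where "q \<in> \<rat>" "a < q" "q < b"
      using Rats_dense_in_real[OF \<open>a < b\<close>] by blast
    ultimately have "q \<in> component x"
      by auto
    with \<open>q \<in> \<rat>\<close> show "component x \<in> component ` \<rat>"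
      using component_eq by (metis rev_image_eqI)
  qed
qed (simp add: countable_rat)

lemma countable_components_if_separable:
  assumes "separable_space \<tau>"
  shows "countable (range component)"
proof -
  obtain D where D: "countable D" "\<tau> closure_of D = topspace \<tau>"
    using assms unfolding separable_space_def by blast
  have "range component \<subseteq> component ` D"
  proof clarify
    fix x
    have "D \<inter> component x \<noteq> {}"
      using D(2) openin_component[of x] in_component[of x]
      unfolding dense_intersects_open by blast
    then show "component x \<in> component ` D"
      using component_eq by blast
  qed
  then show ?thesis
    by (rule countable_subset[OF _ countable_image[OF D(1)]])
qed

lemma isolated_in_component_imp_eq:
  assumes "openin \<tau> {y}" "y \<in> component x"
  shows "y = x"
proof -
  have "component x = {y}"
    using assms component_eq[OF assms(2)] isolated_iff_component_eq_singleton by simp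
  then show ?thesis
    using in_component[of x] by (metis singletonD)
qed

lemma open_nonisolated_contains_rational:
  assumes U: "openin \<tau> U" "x \<in> U" and x: "\<not> openin \<tau> {x}"
  shows "U \<inter> \<rat> \<noteq> {}"
proof -
  let ?C = "component x"
  have "openin (top_of_set ?C) (U \<inter> ?C)"
    using openin_subtopology_Int[OF U(1), of ?C] subtopology_subset_component[OF order_refl] by simp
  then obtain e where "e > 0" and e: "\<forall>y\<in>?C. dist y x < e \<longrightarrow> y \<in> U \<inter> ?C"
    using U(2) in_component[of x] unfolding openin_euclidean_subtopology_iff by blast
  let ?B = "?C \<inter> ball x e"
  have "openin \<tau> ?B"
    by (simp add: openin_Int openin_component openin_if_open)
  with x have "?B \<noteq> {x}"
    by (metis (no_types, lifting))
  moreover have "x \<in> ?B"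
    using \<open>e > 0\<close> in_component[of x] by simp
  ultimately obtain y where "y \<in> ?B" "y \<noteq> x"
    by blast
  moreover have "is_interval ?B"
    by (simp add: is_interval_Int is_interval_component is_interval_ball_real)
  ultimately obtain a b where "a < b" "{a<..<b} \<subseteq> ?B"
    using is_interval_contains_open_interval \<open>x \<in> ?B\<close> by blast
  moreover obtain q where "q \<in> \<rat>" "a < q" "q < b"
    using Rats_dense_in_real[OF \<open>a < b\<close>] by blast
  ultimately have "q \<in> ?B"
    by auto
  with e \<open>q \<in> \<rat>\<close> show ?thesis
    by (auto simp: dist_commute)
qed

lemma uncountable_isolated_if_not_separable:
  assumes "\<not> separable_space \<tau>"
  shows "uncountable {x. openin \<tau> {x}}"
proof
  let ?A = "{x. openin \<tau> {x}}"
  assume "countable ?A"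
  have "\<tau> closure_of (?A \<union> \<rat>) = topspace \<tau>"
    unfolding dense_intersects_open
  proof (intro allI impI)
    fix U assume "openin \<tau> U \<and> U \<noteq> {}"
    then obtain x where "openin \<tau> U" "x \<in> U"
      by blast
    then show "(?A \<union> \<rat>) \<inter> U \<noteq> {}"
      using open_nonisolated_contains_rational by (cases "openin \<tau> {x}") auto
  qed
  with \<open>countable ?A\<close> have "separable_space \<tau>"
    unfolding separable_space_def by (intro exI[of _ "?A \<union> \<rat>"]) (simp add: countable_rat)
  with assms show False
    by contradiction
qed

lemma countable_condensation_points_Diff_isolated:
  "countable (condensation_points {x. openin \<tau> {x}} - {x. openin \<tau> {x}})"
proof -
  let ?A = "{x. openin \<tau> {x}}"
  have "condensation_points ?A - ?A \<subseteq> (\<Union>q\<in>\<rat>. {Inf (component q), Sup (component q)})"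
  proof
    fix x assume x: "x \<in> condensation_points ?A - ?A"
    then have "\<not> openin \<tau> {x}"
      by simp
    then obtain a b where "a < b" "{a<..<b} \<subseteq> component x"
      using nonisolated_component_contains_interval by blast
    moreover obtain q where "q \<in> \<rat>" "a < q" "q < b"
      using Rats_dense_in_real[OF \<open>a < b\<close>] by blast
    ultimately have q: "component q = component x"
      using component_eq by (simp add: subset_iff)
    \<comment> \<open>An interior point of the interval \<open>component x\<close> has a neighbourhood without isolated points.\<close>
    have "(\<forall>z\<in>component x. x \<le> z) \<or> (\<forall>z\<in>component x. z \<le> x)"
    proof (rule ccontr)
      assume "\<not> ?thesis"
      then obtain z1 z2 where z: "z1 \<in> component x" "z1 < x" "z2 \<in> component x" "x < z2"
        by (auto simp: not_le)
      have "{z1<..<z2} \<subseteq> component x"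
        using mem_is_interval_1_I[OF is_interval_component z(1) z(3)] by (simp add: subset_iff)
      then have "{z1<..<z2} \<inter> ?A = {}"
        using isolated_in_component_imp_eq \<open>\<not> openin \<tau> {x}\<close> by blast
      moreover have "uncountable ({z1<..<z2} \<inter> ?A)"
        using x z unfolding condensation_points_def by simp
      ultimately show False
        by simp
    qed
    then have "x = Inf (component q) \<or> x = Sup (component q)"
      unfolding q using cInf_eq_minimum[OF in_component] cSup_eq_maximum[OF in_component] by metis
    with \<open>q \<in> \<rat>\<close> show "x \<in> (\<Union>q\<in>\<rat>. {Inf (component q), Sup (component q)})"
      by blast
  qed
  moreover have "countable (\<Union>q\<in>\<rat>. {Inf (component q), Sup (component q)})"
    by (simp add: countable_rat)
  ultimately show ?thesis
    by (rule countable_subset)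
qed

lemma continuum_lepoll_isolated_if_not_separable:
  assumes "\<not> separable_space \<tau>"
  shows "(UNIV::real set) \<lesssim> {x. openin \<tau> {x}}"
proof -
  let ?A = "{x. openin \<tau> {x}}"
  have "(UNIV::real set) \<lesssim> condensation_points ?A - (condensation_points ?A - ?A)"
    using continuum_lepoll_condensation_points[OF uncountable_isolated_if_not_separable[OF assms]]
      countable_condensation_points_Diff_isolated
    by (rule continuum_lepoll_Diff_countable)
  also have "\<dots> \<lesssim> ?A"
    by (rule subset_imp_lepoll) blast
  finally show ?thesis .
qed

lemma embedding_map_into_component:
  assumes "homeomorphism UNIV T h g" "T \<subseteq> component x"
  shows "embedding_map (top_of_set S) \<tau> h"
proof -
  have "homeomorphic_map (top_of_set S) (top_of_set (h ` S)) h"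
    using homeomorphism_of_subsets[OF assms(1) subset_UNIV order_refl refl]
    by (rule homeomorphism_imp_homeomorphic_map)
  moreover have "h ` S \<subseteq> component x"
    using assms unfolding homeomorphism_def by blast
  ultimately show ?thesis
    unfolding embedding_map_def by (simp add: subtopology_subset_component)
qed

lemma embeddings_of_real_if_not_discrete:
  assumes "\<tau> \<noteq> discrete_topology UNIV"
  obtains J :: "nat \<Rightarrow> real set" and \<phi> :: "nat \<Rightarrow> real \<Rightarrow> real"
  where "\<And>n. openin \<tau> (J n)" "\<And>m n. m \<noteq> n \<Longrightarrow> disjnt (J m) (J n)"
    "\<And>n z. z \<in> J n \<Longrightarrow> \<not> openin \<tau> {z}" "\<And>n z. \<phi> n z \<in> J n"
    "\<And>n S. embedding_map (top_of_set S) \<tau> (\<phi> n)"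
proof -
  obtain x where x: "\<not> openin \<tau> {x}"
    using assms discrete_topology_unique[of UNIV \<tau>] by auto
  then obtain a b where "a < b" and ab: "{a<..<b} \<subseteq> component x"
    using nonisolated_component_contains_interval by blast
  obtain J :: "nat \<Rightarrow> real set" and \<phi> \<psi> :: "nat \<Rightarrow> real \<Rightarrow> real"
    where J: "\<And>n. open (J n)" "\<And>n. J n \<subseteq> {a<..<b}"
      "\<And>m n. m \<noteq> n \<Longrightarrow> disjnt (J m) (J n)" "\<And>n. homeomorphism UNIV (J n) (\<phi> n) (\<psi> n)"
    by (fact disjoint_open_copies_of_real[OF \<open>a < b\<close>])
  have J_component: "J n \<subseteq> component x" for n
    using J(2) ab by blast
  show thesis
  proof (rule that)
    show "openin \<tau> (J n)" for n
      by (rule openin_if_open[OF J(1)])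
    show "\<not> openin \<tau> {z}" if "z \<in> J n" for z n
      using isolated_in_component_imp_eq x J_component that by blast
    show "\<phi> n z \<in> J n" for n z
      using homeomorphism_image1[OF J(4)] by blast
    show "embedding_map (top_of_set S) \<tau> (\<phi> n)" for n S
      by (rule embedding_map_into_component[OF J(4) J_component])
  qed (rule J(3))
qed

end

lemma exists_embedding_map_into_nondiscrete:
  assumes \<tau>1: "locally_connected_refinement \<tau>1" and \<tau>2: "locally_connected_refinement \<tau>2"
    and nondiscrete: "\<tau>2 \<noteq> discrete_topology UNIV"
    and I: "I \<subseteq> {x. openin \<tau>1 {x}}"
    and j: "inj_on j I" "j ` I \<subseteq> {x. openin \<tau>2 {x}}"
    and countable: "countable (connected_component_of_set \<tau>1 ` (- I))"
  shows "\<exists>f. embedding_map \<tau>1 \<tau>2 f"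
proof -
  interpret \<tau>1: locally_connected_refinement \<tau>1 by (rule \<tau>1)
  interpret \<tau>2: locally_connected_refinement \<tau>2 by (rule \<tau>2)
  obtain J :: "nat \<Rightarrow> real set" and \<phi> :: "nat \<Rightarrow> real \<Rightarrow> real"
    where J: "\<And>n. openin \<tau>2 (J n)" "\<And>m n. m \<noteq> n \<Longrightarrow> disjnt (J m) (J n)"
      "\<And>n z. z \<in> J n \<Longrightarrow> \<not> openin \<tau>2 {z}" "\<And>n z. \<phi> n z \<in> J n"
      "\<And>n S. embedding_map (top_of_set S) \<tau>2 (\<phi> n)"
    by (fact \<tau>2.embeddings_of_real_if_not_discrete[OF nondiscrete])
  obtain idx :: "real set \<Rightarrow> nat" where idx: "inj_on idx (\<tau>1.component ` (- I))"
    using countable unfolding countable_def by blast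
  have component_I: "\<tau>1.component x = {x}" if "x \<in> I" for x
    using I that \<tau>1.isolated_iff_component_eq_singleton by blast
  have not_I: "y \<notin> I" if "x \<notin> I" "y \<in> \<tau>1.component x" for x y
    using I that \<tau>1.isolated_in_component_imp_eq by blast
  define f where "f x = (if x \<in> I then j x else \<phi> (idx (\<tau>1.component x)) x)" for x
  define D where "D x = (if x \<in> I then {j x} else J (idx (\<tau>1.component x)))" for x
  have "embedding_map \<tau>1 \<tau>2 f"
  proof (rule embedding_map_glue[where I=UNIV and C=\<tau>1.component and D=D])
    show "topspace \<tau>1 = (\<Union>x\<in>UNIV. \<tau>1.component x)"
      by (auto simp: connected_component_of_refl)
    show "openin \<tau>1 (\<tau>1.component x)" for x
      by (rule \<tau>1.openin_component)
    show "openin \<tau>2 (D x)" for x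
      using j(2) J(1) by (auto simp: D_def)
    show "f ` \<tau>1.component x \<subseteq> D x" for x
      using component_I not_I \<tau>1.component_eq J(4) by (auto simp: f_def D_def)
    show "disjnt (D x) (D y)" if "\<tau>1.component x \<noteq> \<tau>1.component y" for x y
    proof -
      have "x \<noteq> y"
        using that by blast
      moreover have "idx (\<tau>1.component x) \<noteq> idx (\<tau>1.component y)" if "x \<notin> I" "y \<notin> I"
        using that \<open>\<tau>1.component x \<noteq> \<tau>1.component y\<close> inj_onD[OF idx] by blast
      ultimately show ?thesis
        using j J(2,3) by (auto simp: D_def disjnt_iff inj_on_eq_iff)
    qed
    show "embedding_map (subtopology \<tau>1 (\<tau>1.component x)) \<tau>2 f" for x
    proof (cases "x \<in> I")
      case True
      then show ?thesis
        using component_I j(2) by (simp add: embedding_map_singleton f_def)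
    next
      case False
      from J(5) have "embedding_map (top_of_set (\<tau>1.component x)) \<tau>2 f"
        by (rule embedding_map_eq) (simp add: f_def not_I[OF False] \<tau>1.component_eq)
      then show ?thesis
        by (simp add: \<tau>1.subtopology_subset_component[OF order_refl])
    qed
  qed
  then show ?thesis
    by blast
qed

theorem proposition3:
  fixes \<tau>1 \<tau>2 :: "real topology"
  assumes "\<tau>1 \<in> finer_than_euclidean" and "\<tau>2 \<in> finer_than_euclidean"
    and "locally_connected_space \<tau>1" and "locally_connected_space \<tau>2"
  shows "(separable_space \<tau>1 \<and> \<tau>2 \<noteq> discrete_topology UNIV
           \<longrightarrow> (\<exists>S. \<tau>1 homeomorphic_space subtopology \<tau>2 S))
       \<and> (\<not> separable_space \<tau>2 \<and> \<tau>2 \<noteq> discrete_topology UNIV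
           \<longrightarrow> (\<exists>S. \<tau>1 homeomorphic_space subtopology \<tau>2 S))"
proof -
  have \<tau>1: "locally_connected_refinement \<tau>1" and \<tau>2: "locally_connected_refinement \<tau>2"
    using assms by unfold_locales
  interpret \<tau>1: locally_connected_refinement \<tau>1 by (rule \<tau>1)
  interpret \<tau>2: locally_connected_refinement \<tau>2 by (rule \<tau>2)
  have "\<exists>f. embedding_map \<tau>1 \<tau>2 f" if "separable_space \<tau>1" "\<tau>2 \<noteq> discrete_topology UNIV"
    using exists_embedding_map_into_nondiscrete[OF \<tau>1 \<tau>2 that(2), of "{}"]
      \<tau>1.countable_components_if_separable[OF that(1)] by simp
  moreover have "\<exists>f. embedding_map \<tau>1 \<tau>2 f"
    if nonseparable: "\<not> separable_space \<tau>2" and nondiscrete: "\<tau>2 \<noteq> discrete_topology UNIV"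
  proof -
    obtain g :: "real \<Rightarrow> real" where "inj g" "range g \<subseteq> {x. openin \<tau>2 {x}}"
      using \<tau>2.continuum_lepoll_isolated_if_not_separable[OF nonseparable] unfolding lepoll_def by blast
    then show ?thesis
      using exists_embedding_map_into_nondiscrete[OF \<tau>1 \<tau>2 nondiscrete order_refl, of g]
        \<tau>1.countable_nonisolated_components
      by (auto simp: Collect_neg_eq[symmetric] intro: inj_on_subset)
  qed
  ultimately show ?thesis
    by (meson embedding_map_imp_homeomorphic_space)
qed

end
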